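(* Assume the Continuum Hypothesis. Let $X$ be a real Banach space with $\operatorname{dens} X = \operatorname{dens} X^* = \omega_1$. Then for every $\varepsilon > 0$, the closed unit ball $B_X$ contains an overcomplete set which is $(1-\varepsilon)$-separated, i.e. any two distinct elements $x, y$ of it satisfy $\|x-y\| \geq 1-\varepsilon$.
   Context: $\operatorname{dens}$ denotes the density character. A subset $S$ of a Banach space $X$ with $|S| = \operatorname{dens} X$ is called overcomplete if every subset $\Lambda \subseteq S$ with $|\Lambda| = |S|$ is linearly dense in $X$. *)

theory Defs
  imports "HOL-Analysis.Analysis"
begin

abbreviation omega1 :: "nat set rel" where
  "omega1 \<equiv> cardSuc natLeq"

definition card_eq :: "'a set \<Rightarrow> 'b rel \<Rightarrow> bool" where
  "card_eq A k \<longleftrightarrow> (card_of A, k) \<in> ordIso"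

definition card_ge :: "'a set \<Rightarrow> 'b rel \<Rightarrow> bool" where
  "card_ge A k \<longleftrightarrow> (k, card_of A) \<in> ordLeq"

definition dens_is :: "'a::metric_space set \<Rightarrow> 'b rel \<Rightarrow> bool" where
  "dens_is S k \<longleftrightarrow>
     (\<exists>D\<subseteq>S. S \<subseteq> closure D \<and> card_eq D k) \<and>
     (\<forall>D\<subseteq>S. S \<subseteq> closure D \<longrightarrow> card_ge D k)"

definition overcomplete :: "'b rel \<Rightarrow> 'a::real_normed_vector set \<Rightarrow> bool" where
  "overcomplete k S \<longleftrightarrow> card_eq S k \<and>
     (\<forall>L\<subseteq>S. (card_of L, card_of S) \<in> ordIso \<longrightarrow> closure (span L) = UNIV)"

end

theory Submission
  imports Defs "HOL-Library.Countable_Set_Type"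
begin

text \<open>Under CH the dual \<open>X\<^sup>*\<close>, which has a dense subset of cardinality \<open>\<omega>\<^sub>1 = |\<real>|\<close>,
  has exactly \<open>\<omega>\<^sub>1\<close> elements (each is the limit of a sequence from that subset); so it can be
  indexed along a well-order whose proper initial segments are countable. By transfinite
  recursion choose \<open>x\<^sub>f \<in> B\<^sub>X\<close> at distance \<open>\<ge> 1 - \<epsilon>\<close> from all earlier points and with
  \<open>h x\<^sub>f \<noteq> 0\<close> for all earlier nonzero \<open>h\<close>: the closed span of countably many points is a
  proper subspace because \<open>X\<close> is not separable, Riesz's lemma yields a small ball inside \<open>B\<^sub>X\<close>
  far from it, and by Baire's theorem that ball is not covered by countably many kernels.
  If uncountably many \<open>x\<^sub>f\<close> had a non-dense span, Hahn-Banach would give a nonzero \<open>h\<close>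
  vanishing on all of them; but \<open>h\<close> vanishes on no \<open>x\<^sub>f\<close> with \<open>f\<close> after \<open>h\<close>, so they all lie in
  the countable initial segment up to \<open>h\<close>.\<close>

unbundle cardinal_syntax

section \<open>The Hahn-Banach theorem for normed spaces\<close>

text \<open>Partial linear functionals are encoded by their graphs, so that the union of a chain is
  again one; single-valuedness follows from domination.\<close>

definition dominated_linear_graph :: "real \<Rightarrow> ('a::real_normed_vector \<times> real) set \<Rightarrow> bool" where
  "dominated_linear_graph K G \<longleftrightarrow>
     (\<forall>(x, a)\<in>G. \<forall>(y, b)\<in>G. (x + y, a + b) \<in> G) \<and>
     (\<forall>(x, a)\<in>G. \<forall>c. (c *\<^sub>R x, c * a) \<in> G) \<and>
     (\<forall>(x, a)\<in>G. a \<le> K * norm x)"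

lemma dominated_linear_graphI:
  assumes "\<And>x a y b. (x, a) \<in> G \<Longrightarrow> (y, b) \<in> G \<Longrightarrow> (x + y, a + b) \<in> G"
    and "\<And>x a c. (x, a) \<in> G \<Longrightarrow> (c *\<^sub>R x, c * a) \<in> G"
    and "\<And>x a. (x, a) \<in> G \<Longrightarrow> a \<le> K * norm x"
  shows "dominated_linear_graph K G"
  using assms by (auto simp: dominated_linear_graph_def)

lemma
  assumes "dominated_linear_graph K G"
  shows dominated_linear_graph_add: "(x, a) \<in> G \<Longrightarrow> (y, b) \<in> G \<Longrightarrow> (x + y, a + b) \<in> G"
    and dominated_linear_graph_scale: "(x, a) \<in> G \<Longrightarrow> (c *\<^sub>R x, c * a) \<in> G"
    and dominated_linear_graph_le: "(x, a) \<in> G \<Longrightarrow> a \<le> K * norm x"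
  using assms by (auto simp: dominated_linear_graph_def)

lemma dominated_linear_graph_zero:
  assumes "dominated_linear_graph K G" "G \<noteq> {}"
  shows "(0, 0) \<in> G"
  using assms dominated_linear_graph_scale[OF assms(1), of _ _ 0] by fastforce

lemma dominated_linear_graph_unique:
  assumes G: "dominated_linear_graph K G" and "(x, a) \<in> G" "(x, b) \<in> G"
  shows "a = b"
proof -
  have "a - b \<le> 0" if "(x, a) \<in> G" "(x, b) \<in> G" for a b
    using dominated_linear_graph_le[OF G dominated_linear_graph_add[OF G that(1)
          dominated_linear_graph_scale[OF G that(2), of "-1"]]]
    by simp
  then show ?thesis
    using assms(2,3) by (metis antisym diff_le_0_iff_le)
qed

lemma dominated_linear_graph_Union:
  assumes dom: "\<And>G. G \<in> C \<Longrightarrow> dominated_linear_graph K G"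
    and chain: "\<And>G H. G \<in> C \<Longrightarrow> H \<in> C \<Longrightarrow> G \<subseteq> H \<or> H \<subseteq> G"
  shows "dominated_linear_graph K (\<Union>C)"
proof (rule dominated_linear_graphI)
  fix x a y b assume "(x, a) \<in> \<Union>C" "(y, b) \<in> \<Union>C"
  then obtain G H where GH: "G \<in> C" "H \<in> C" "(x, a) \<in> G" "(y, b) \<in> H"
    by blast
  then consider "(x, a) \<in> H" | "(y, b) \<in> G"
    using chain by blast
  then show "(x + y, a + b) \<in> \<Union>C"
    by cases (use GH dom dominated_linear_graph_add in blast)+
next
  show "(c *\<^sub>R x, c * a) \<in> \<Union>C" if "(x, a) \<in> \<Union>C" for x a c
    using that dom dominated_linear_graph_scale by blast
  show "a \<le> K * norm x" if "(x, a) \<in> \<Union>C" for x a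
    using that dom dominated_linear_graph_le by blast
qed

lemma dominated_linear_graph_extension_value:
  assumes G: "dominated_linear_graph K G" "G \<noteq> {}" and K: "0 \<le> K"
  obtains c where "\<And>x a. (x, a) \<in> G \<Longrightarrow> a - K * norm (x - y) \<le> c"
    and "\<And>x a. (x, a) \<in> G \<Longrightarrow> c \<le> K * norm (x + y) - a"
proof -
  have key: "a - K * norm (x - y) \<le> K * norm (x' + y) - a'"
    if "(x, a) \<in> G" "(x', a') \<in> G" for x a x' a'
  proof -
    have "a + a' \<le> K * norm (x + x')"
      using that G by (blast intro: dominated_linear_graph_le dominated_linear_graph_add)
    also have "\<dots> \<le> K * (norm (x - y) + norm (x' + y))"
      using norm_triangle_ineq[of "x - y" "x' + y"] K by (intro mult_left_mono) auto
    finally show ?thesis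
      by (simp add: algebra_simps)
  qed
  define T where "T = {a - K * norm (x - y) | x a. (x, a) \<in> G}"
  have "T \<noteq> {}"
    using G by (auto simp: T_def)
  moreover have "bdd_above T"
    using key[OF _ dominated_linear_graph_zero[OF G]] by (auto simp: T_def bdd_above_def)
  ultimately show ?thesis
    using key by (intro that[of "Sup T"] cSup_upper cSup_least) (auto simp: T_def)
qed

lemma dominated_linear_graph_extension_le:
  assumes G: "dominated_linear_graph K G" and xa: "(x, a) \<in> G"
    and lower: "\<And>x a. (x, a) \<in> G \<Longrightarrow> a - K * norm (x - y) \<le> c"
    and upper: "\<And>x a. (x, a) \<in> G \<Longrightarrow> c \<le> K * norm (x + y) - a"
  shows "a + t * c \<le> K * norm (x + t *\<^sub>R y)"
proof -
  consider "t > 0" | "t < 0" | "t = 0"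
    by linarith
  then show ?thesis
  proof cases
    case 1
    have "c \<le> K * norm (inverse t *\<^sub>R x + y) - inverse t * a"
      using upper dominated_linear_graph_scale[OF G xa] by blast
    also have "inverse t *\<^sub>R x + y = inverse t *\<^sub>R (x + t *\<^sub>R y)"
      using 1 by (simp add: algebra_simps)
    finally have "t * c \<le> t * (K * (inverse t * norm (x + t *\<^sub>R y)) - inverse t * a)"
      using 1 by (simp add: mult_left_mono)
    also have "\<dots> = K * norm (x + t *\<^sub>R y) - a"
      using 1 by (simp add: field_simps)
    finally show ?thesis
      by (simp add: mult.commute)
  next
    case 2
    have "- inverse t * a - K * norm (- inverse t *\<^sub>R x - y) \<le> c"
      using lower dominated_linear_graph_scale[OF G xa] by blast
    also have "- inverse t *\<^sub>R x - y = - inverse t *\<^sub>R (x + t *\<^sub>R y)"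
      using 2 by (simp add: algebra_simps)
    finally have "- t * (- inverse t * a - K * (- inverse t * norm (x + t *\<^sub>R y))) \<le> - t * c"
      using 2 by (simp add: mult_left_mono)
    also have "- t * (- inverse t * a - K * (- inverse t * norm (x + t *\<^sub>R y))) =
        a - K * norm (x + t *\<^sub>R y)"
      using 2 by (simp add: field_simps)
    finally show ?thesis
      by (simp add: mult.commute)
  next
    case 3
    then show ?thesis
      using dominated_linear_graph_le[OF G xa] by simp
  qed
qed

lemma dominated_linear_graph_extend:
  assumes G: "dominated_linear_graph K G"
    and lower: "\<And>x a. (x, a) \<in> G \<Longrightarrow> a - K * norm (x - y) \<le> c"
    and upper: "\<And>x a. (x, a) \<in> G \<Longrightarrow> c \<le> K * norm (x + y) - a"
  shows "dominated_linear_graph K {(x + t *\<^sub>R y, a + t * c) | x a t. (x, a) \<in> G}"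
    (is "dominated_linear_graph K ?G'")
proof -
  have mem: "(x + t *\<^sub>R y, a + t * c) \<in> ?G'" if "(x, a) \<in> G" for x a t
    using that by blast
  show ?thesis
  proof (rule dominated_linear_graphI)
    fix u b v d assume "(u, b) \<in> ?G'" "(v, d) \<in> ?G'"
    then obtain x a t x' a' t' where "(x, a) \<in> G" "(x', a') \<in> G"
      and uv: "u = x + t *\<^sub>R y" "b = a + t * c" "v = x' + t' *\<^sub>R y" "d = a' + t' * c"
      by blast
    then have "((x + x') + (t + t') *\<^sub>R y, (a + a') + (t + t') * c) \<in> ?G'"
      using G by (blast intro: mem dominated_linear_graph_add)
    then show "(u + v, b + d) \<in> ?G'"
      by (simp add: uv algebra_simps)
  next
    fix u b r assume "(u, b) \<in> ?G'"
    then obtain x a t where "(x, a) \<in> G" and ub: "u = x + t *\<^sub>R y" "b = a + t * c"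
      by blast
    then have "(r *\<^sub>R x + (r * t) *\<^sub>R y, r * a + (r * t) * c) \<in> ?G'"
      using G by (blast intro: mem dominated_linear_graph_scale)
    then show "(r *\<^sub>R u, r * b) \<in> ?G'"
      by (simp add: ub algebra_simps)
  next
    fix u b assume "(u, b) \<in> ?G'"
    then obtain x a t where "(x, a) \<in> G" and "u = x + t *\<^sub>R y" "b = a + t * c"
      by blast
    then show "b \<le> K * norm u"
      using dominated_linear_graph_extension_le[OF G _ lower upper] by simp
  qed
qed

lemma total_dominated_linear_graph_blinfun:
  fixes G :: "('a::real_normed_vector \<times> real) set"
  assumes G: "dominated_linear_graph K G" and total: "\<And>x. \<exists>a. (x, a) \<in> G"
  obtains f :: "'a \<Rightarrow>\<^sub>L real" where "\<And>x a. (x, a) \<in> G \<Longrightarrow> blinfun_apply f x = a"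
proof -
  obtain f where f: "\<And>x. (x, f x) \<in> G"
    using total by metis
  have f_eq: "f x = a" if "(x, a) \<in> G" for x a
    using dominated_linear_graph_unique[OF G f that] .
  have "bounded_linear f"
  proof (rule bounded_linear_intro)
    show "f (x + y) = f x + f y" for x y
      using f_eq dominated_linear_graph_add[OF G f f] .
    show "f (r *\<^sub>R x) = r *\<^sub>R f x" for r x
      using f_eq dominated_linear_graph_scale[OF G f] by simp
    show "norm (f x) \<le> norm x * K" for x
    proof -
      have "f (- x) = - f x"
        using f_eq[OF dominated_linear_graph_scale[OF G f, where c = "-1"]] by simp
      then show ?thesis
        using dominated_linear_graph_le[OF G f, where x = x] dominated_linear_graph_le[OF G f, where x = "- x"]
        by (simp add: abs_le_iff mult.commute)
    qed
  qed
  then show ?thesis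
    using that[of "Blinfun f"] f_eq by (simp add: bounded_linear_Blinfun_apply)
qed

lemma maximal_dominated_linear_graph_total:
  assumes M: "dominated_linear_graph K M" "M \<noteq> {}" and K: "0 \<le> K"
    and maximal: "\<And>H. dominated_linear_graph K H \<Longrightarrow> M \<subseteq> H \<Longrightarrow> H = M"
  shows "\<exists>a. (y, a) \<in> M"
proof -
  obtain c where lower: "\<And>x a. (x, a) \<in> M \<Longrightarrow> a - K * norm (x - y) \<le> c"
    and upper: "\<And>x a. (x, a) \<in> M \<Longrightarrow> c \<le> K * norm (x + y) - a"
    using dominated_linear_graph_extension_value[OF M K] by blast
  let ?M' = "{(x + t *\<^sub>R y, a + t * c) | x a t. (x, a) \<in> M}"
  have mem: "(x + t *\<^sub>R y, a + t * c) \<in> ?M'" if "(x, a) \<in> M" for x a t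
    using that by blast
  have "M \<subseteq> ?M'"
    using mem[where t = 0] by auto
  then have "?M' = M"
    by (intro maximal dominated_linear_graph_extend[OF M(1) lower upper])
  moreover have "(y, c) \<in> ?M'"
    using mem[OF dominated_linear_graph_zero[OF M], where t = 1] by simp
  ultimately show ?thesis
    by (intro exI[of _ c]) simp
qed

theorem Hahn_Banach_dominated_linear_graph:
  fixes G :: "('a::real_normed_vector \<times> real) set"
  assumes G: "dominated_linear_graph K G" "G \<noteq> {}" and K: "0 \<le> K"
  obtains f :: "'a \<Rightarrow>\<^sub>L real" where "\<And>x a. (x, a) \<in> G \<Longrightarrow> blinfun_apply f x = a"
proof -
  let ?A = "{H. G \<subseteq> H \<and> dominated_linear_graph K H}"
  have "\<exists>M\<in>?A. \<forall>H\<in>?A. M \<subseteq> H \<longrightarrow> H = M"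
  proof (rule subset_Zorn_nonempty)
    fix C assume "C \<noteq> {}" "subset.chain ?A C"
    then have "C \<subseteq> ?A" and chain: "\<And>X Y. X \<in> C \<Longrightarrow> Y \<in> C \<Longrightarrow> X \<subseteq> Y \<or> Y \<subseteq> X"
      unfolding subset.chain_def by blast+
    have "dominated_linear_graph K (\<Union>C)"
      by (rule dominated_linear_graph_Union) (use \<open>C \<subseteq> ?A\<close> chain in blast)+
    moreover have "G \<subseteq> \<Union>C"
      using \<open>C \<noteq> {}\<close> \<open>C \<subseteq> ?A\<close> by blast
    ultimately show "\<Union>C \<in> ?A"
      by blast
  qed (use G in blast)
  then obtain M where "M \<in> ?A" and max: "\<forall>H\<in>?A. M \<subseteq> H \<longrightarrow> H = M"
    by (rule bexE)
  then have GM: "G \<subseteq> M" and M: "dominated_linear_graph K M"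
    by simp_all
  have "M \<noteq> {}"
    using GM G by blast
  have "H = M" if "dominated_linear_graph K H" "M \<subseteq> H" for H
    using max that GM by blast
  then have "\<exists>a. (y, a) \<in> M" for y
    by (rule maximal_dominated_linear_graph_total[OF M \<open>M \<noteq> {}\<close> K])
  then obtain f :: "'a \<Rightarrow>\<^sub>L real" where "\<And>x a. (x, a) \<in> M \<Longrightarrow> blinfun_apply f x = a"
    using total_dominated_linear_graph_blinfun[OF M] by blast
  then show ?thesis
    using that GM by blast
qed

lemma dominated_linear_graph_line_over_subspace:
  fixes Z :: "'a::real_normed_vector set"
  assumes Z: "subspace Z" and x0: "0 < infdist x0 Z"
  shows "dominated_linear_graph (1 / infdist x0 Z) {(z + t *\<^sub>R x0, t) | z t. z \<in> Z}"
    (is "dominated_linear_graph _ ?G")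
proof -
  have mem: "(z + t *\<^sub>R x0, t) \<in> ?G" if "z \<in> Z" for z t
    using that by blast
  show ?thesis
  proof (rule dominated_linear_graphI)
    fix u a v b assume "(u, a) \<in> ?G" "(v, b) \<in> ?G"
    then obtain z z' where "z \<in> Z" "z' \<in> Z" and uv: "u = z + a *\<^sub>R x0" "v = z' + b *\<^sub>R x0"
      by blast
    then have eq: "(z + z') + (a + b) *\<^sub>R x0 = u + v" and "z + z' \<in> Z"
      using Z by (simp_all add: subspace_add algebra_simps)
    then show "(u + v, a + b) \<in> ?G"
      using mem[of "z + z'" "a + b", unfolded eq] by blast
  next
    fix u a c assume "(u, a) \<in> ?G"
    then obtain z where "z \<in> Z" and u: "u = z + a *\<^sub>R x0"
      by blast
    then have eq: "c *\<^sub>R z + (c * a) *\<^sub>R x0 = c *\<^sub>R u" and "c *\<^sub>R z \<in> Z"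
      using Z by (simp_all add: subspace_scale algebra_simps)
    then show "(c *\<^sub>R u, c * a) \<in> ?G"
      using mem[of "c *\<^sub>R z" "c * a", unfolded eq] by blast
  next
    fix u t assume "(u, t) \<in> ?G"
    then obtain z where z: "z \<in> Z" and u: "u = z + t *\<^sub>R x0"
      by blast
    show "t \<le> 1 / infdist x0 Z * norm u"
    proof (cases "t > 0")
      case True
      have "- (1 / t) *\<^sub>R z \<in> Z"
        using Z z by (simp add: subspace_scale subspace_neg)
      then have "infdist x0 Z \<le> norm (x0 - - (1 / t) *\<^sub>R z)"
        by (metis infdist_le dist_norm)
      also have "x0 - - (1 / t) *\<^sub>R z = (1 / t) *\<^sub>R u"
        using True by (simp add: u algebra_simps)
      finally show ?thesis
        using True x0 by (simp add: field_simps)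
    next
      case False
      then show ?thesis
        using x0 by (simp add: mult_nonneg_nonneg order.trans[of t 0])
    qed
  qed
qed

corollary separating_blinfun_closed_subspace:
  fixes Z :: "'a::real_normed_vector set"
  assumes Z: "subspace Z" "closed Z" and x0: "x0 \<notin> Z"
  obtains f :: "'a \<Rightarrow>\<^sub>L real"
  where "\<And>z. z \<in> Z \<Longrightarrow> blinfun_apply f z = 0" and "blinfun_apply f x0 = 1"
proof -
  have "0 \<in> Z"
    using Z by (simp add: subspace_0)
  then have d: "0 < infdist x0 Z"
    using infdist_pos_not_in_closed[OF Z(2) _ x0] by auto
  let ?G = "{(z + t *\<^sub>R x0, t) | z t. z \<in> Z}"
  have mem: "(z + t *\<^sub>R x0, t) \<in> ?G" if "z \<in> Z" for z t
    using that by blast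
  have "?G \<noteq> {}" "0 \<le> 1 / infdist x0 Z"
    using mem[OF \<open>0 \<in> Z\<close>] d by auto
  then obtain f :: "'a \<Rightarrow>\<^sub>L real" where f: "\<And>x a. (x, a) \<in> ?G \<Longrightarrow> blinfun_apply f x = a"
    using Hahn_Banach_dominated_linear_graph[OF dominated_linear_graph_line_over_subspace[OF Z(1) d]]
    by blast
  show ?thesis
  proof (rule that)
    show "blinfun_apply f z = 0" if "z \<in> Z" for z
      using f[OF mem[OF that, where t = 0]] by simp
    show "blinfun_apply f x0 = 1"
      using f[OF mem[OF \<open>0 \<in> Z\<close>, where t = 1]] by simp
  qed
qed

section \<open>Riesz's lemma and Baire category\<close>

lemma Riesz_lemma:
  fixes Z :: "'a::real_normed_vector set"
  assumes Z: "subspace Z" "closed Z" "Z \<noteq> UNIV" and \<delta>: "0 < \<delta>" "\<delta> < 1"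
  obtains u where "norm u = 1" and "\<And>z. z \<in> Z \<Longrightarrow> 1 - \<delta> \<le> norm (u - z)"
proof -
  obtain x0 where x0: "x0 \<notin> Z"
    using Z(3) by blast
  have "0 \<in> Z"
    using Z(1) by (simp add: subspace_0)
  define d where "d = infdist x0 Z"
  have d: "0 < d"
    unfolding d_def using infdist_pos_not_in_closed[OF Z(2) _ x0] \<open>0 \<in> Z\<close> by blast
  have "d < d / (1 - \<delta>)"
    using d \<delta> by (simp add: field_simps)
  moreover have "(INF z\<in>Z. dist x0 z) = d"
    using infdist_notempty[of Z x0] \<open>0 \<in> Z\<close> unfolding d_def by force
  ultimately have "(INF z\<in>Z. dist x0 z) < d / (1 - \<delta>)"
    by simp
  moreover have "bdd_below ((\<lambda>z. dist x0 z) ` Z)"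
    by (rule bdd_belowI2[of _ 0]) simp
  ultimately obtain z0 where z0: "z0 \<in> Z" "dist x0 z0 < d / (1 - \<delta>)"
    using cINF_less_iff[of Z "\<lambda>z. dist x0 z"] \<open>0 \<in> Z\<close> by blast
  define r where "r = norm (x0 - z0)"
  have r: "0 < r" "(1 - \<delta>) * r < d"
    using x0 z0 \<delta> by (auto simp: r_def dist_norm field_simps)
  define u where "u = (1 / r) *\<^sub>R (x0 - z0)"
  show ?thesis
  proof (rule that)
    show "norm u = 1"
      using r by (simp add: u_def r_def)
    fix z assume "z \<in> Z"
    then have "z0 + r *\<^sub>R z \<in> Z"
      using Z(1) z0 by (simp add: subspace_add subspace_scale)
    then have "d \<le> norm (x0 - (z0 + r *\<^sub>R z))"
      unfolding d_def by (metis infdist_le dist_norm)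
    also have "x0 - (z0 + r *\<^sub>R z) = r *\<^sub>R (u - z)"
      using r by (simp add: u_def algebra_simps)
    finally have "d \<le> norm (u - z) * r"
      using r by (simp add: mult.commute)
    then have "(1 - \<delta>) * r < norm (u - z) * r"
      using r(2) by linarith
    then show "1 - \<delta> \<le> norm (u - z)"
      using r by simp
  qed
qed

lemma subspace_interior_nonempty_eq_UNIV:
  fixes S :: "'a::real_normed_vector set"
  assumes S: "subspace S" and "interior S \<noteq> {}"
  shows "S = UNIV"
proof -
  obtain c where "c \<in> interior S"
    using assms(2) by blast
  then obtain e where "0 < e" "ball c e \<subseteq> S"
    by (meson interior_subset open_contains_ball_eq open_interior subset_trans)
  have "v \<in> S" for v
  proof (cases "v = 0")
    case True
    then show ?thesis
      using S by (simp add: subspace_0)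
  next
    case False
    define k where "k = e / (2 * norm v)"
    have "0 < k" "norm (k *\<^sub>R v) < e"
      using False \<open>0 < e\<close> by (simp_all add: k_def)
    then have "c + k *\<^sub>R v \<in> S" "c \<in> S"
      using \<open>0 < e\<close> \<open>ball c e \<subseteq> S\<close> by (auto simp: dist_norm)
    then have "k *\<^sub>R v \<in> S"
      using subspace_diff[OF S, of "c + k *\<^sub>R v" c] by simp
    then have "(1 / k) *\<^sub>R (k *\<^sub>R v) \<in> S"
      using S by (simp only: subspace_scale)
    then show ?thesis
      using \<open>0 < k\<close> by simp
  qed
  then show ?thesis
    by blast
qed

lemma exists_avoiding_countable_kernels:
  fixes H :: "('a::banach \<Rightarrow>\<^sub>L real) set"
  assumes H: "countable H" "0 \<notin> H" and U: "open U" "U \<noteq> {}"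
  obtains x where "x \<in> U" and "\<And>h. h \<in> H \<Longrightarrow> blinfun_apply h x \<noteq> 0"
proof -
  have kernel: "closed {x. blinfun_apply h x = 0} \<and> interior {x. blinfun_apply h x = 0} = {}"
    if "h \<in> H" for h
  proof
    show "closed {x. blinfun_apply h x = 0}"
      by (intro closed_Collect_eq continuous_intros)
    have "subspace {x. blinfun_apply h x = 0}"
      unfolding subspace_def by (simp add: blinfun.add_right blinfun.scaleR_right)
    moreover have "{x. blinfun_apply h x = 0} \<noteq> UNIV"
    proof
      assume "{x. blinfun_apply h x = 0} = UNIV"
      then have "h = 0"
        by (intro blinfun_eqI) auto
      then show False
        using that H(2) by simp
    qed
    ultimately show "interior {x. blinfun_apply h x = 0} = {}"
      using subspace_interior_nonempty_eq_UNIV by blast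
  qed
  let ?K = "(\<lambda>h. {x. blinfun_apply h x = 0}) ` H"
  have "euclidean interior_of \<Union>?K = {}"
  proof (rule Baire_category_alt)
    show "completely_metrizable_space (euclidean :: 'a topology) \<or>
        locally_compact_space (euclidean :: 'a topology) \<and> regular_space (euclidean :: 'a topology)"
      using completely_metrizable_space_euclidean by blast
    show "countable ?K"
      using H(1) by blast
    show "closedin euclidean K \<and> euclidean interior_of K = {}" if "K \<in> ?K" for K
      using that kernel by auto
  qed
  then have "\<not> U \<subseteq> \<Union>?K"
    using U interior_maximal[of U "\<Union>?K"] by auto
  then show ?thesis
    using that by blast
qed

section \<open>Countably generated subspaces are separable\<close>

lemma subspace_closure_Rats_subspace:
  fixes S :: "'a::real_normed_vector set"
  assumes "0 \<in> S" and add: "\<And>x y. x \<in> S \<Longrightarrow> y \<in> S \<Longrightarrow> x + y \<in> S"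
    and scale: "\<And>r x. r \<in> \<rat> \<Longrightarrow> x \<in> S \<Longrightarrow> r *\<^sub>R x \<in> S"
  shows "subspace (closure S)"
  unfolding subspace_def
proof (intro conjI ballI allI)
  show "0 \<in> closure S"
    using \<open>0 \<in> S\<close> closure_subset by blast
next
  fix x y assume "x \<in> closure S" "y \<in> closure S"
  then obtain s t where "\<And>n. s n \<in> S" "s \<longlonglongrightarrow> x" "\<And>n. t n \<in> S" "t \<longlonglongrightarrow> y"
    unfolding closure_sequential by metis
  then show "x + y \<in> closure S"
    unfolding closure_sequential by (intro exI[of _ "\<lambda>n. s n + t n"]) (simp add: add tendsto_add)
next
  fix c :: real and x assume "x \<in> closure S"
  then obtain s where s: "\<And>n. s n \<in> S" "s \<longlonglongrightarrow> x"
    unfolding closure_sequential by metis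
  have "c \<in> closure \<rat>"
    by (simp add: Rats_closure_real)
  then obtain r where r: "\<And>n. r n \<in> \<rat>" "r \<longlonglongrightarrow> c"
    unfolding closure_sequential by metis
  show "c *\<^sub>R x \<in> closure S"
    unfolding closure_sequential using r s
    by (intro exI[of _ "\<lambda>n. r n *\<^sub>R s n"]) (simp add: scale tendsto_scaleR)
qed

corollary subspace_closure:
  fixes S :: "'a::real_normed_vector set"
  assumes "subspace S"
  shows "subspace (closure S)"
  using assms by (intro subspace_closure_Rats_subspace) (simp_all add: subspace_0 subspace_add subspace_scale)

definition rational_combinations :: "'a::real_vector set \<Rightarrow> 'a set" where
  "rational_combinations Y = sum_list ` lists ((\<lambda>(r, y). r *\<^sub>R y) ` (\<rat> \<times> Y))"

lemma countable_rational_combinations: "countable Y \<Longrightarrow> countable (rational_combinations Y)"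
  unfolding rational_combinations_def using countable_rat
  by (intro countable_image countable_lists countable_SIGMA)

lemma rational_combinations_base: "y \<in> Y \<Longrightarrow> y \<in> rational_combinations Y"
  unfolding rational_combinations_def
  by (rule image_eqI[of _ _ "[y]"]) (auto intro!: image_eqI[of _ _ "(1, y)"])

lemma rational_combinations_add:
  assumes "x \<in> rational_combinations Y" "y \<in> rational_combinations Y"
  shows "x + y \<in> rational_combinations Y"
proof -
  obtain xs ys where "xs \<in> lists ((\<lambda>(r, y). r *\<^sub>R y) ` (\<rat> \<times> Y))"
    "ys \<in> lists ((\<lambda>(r, y). r *\<^sub>R y) ` (\<rat> \<times> Y))" "x = sum_list xs" "y = sum_list ys"
    using assms unfolding rational_combinations_def by blast
  then have "x + y = sum_list (xs @ ys)" "xs @ ys \<in> lists ((\<lambda>(r, y). r *\<^sub>R y) ` (\<rat> \<times> Y))"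
    by simp_all
  then show ?thesis
    unfolding rational_combinations_def by (rule image_eqI)
qed

lemma rational_combinations_scale:
  assumes "r \<in> \<rat>" "x \<in> rational_combinations Y"
  shows "r *\<^sub>R x \<in> rational_combinations Y"
proof -
  let ?Q = "(\<lambda>(r, y). r *\<^sub>R y) ` (\<rat> \<times> Y)"
  obtain xs where xs: "xs \<in> lists ?Q" "x = sum_list xs"
    using assms(2) unfolding rational_combinations_def by blast
  have "r *\<^sub>R q \<in> ?Q" if "q \<in> ?Q" for q
  proof -
    obtain s y where "s \<in> \<rat>" "y \<in> Y" "q = s *\<^sub>R y"
      using \<open>q \<in> ?Q\<close> by (auto elim!: imageE)
    then have "(r * s, y) \<in> \<rat> \<times> Y" "r *\<^sub>R q = (\<lambda>(r, y). r *\<^sub>R y) (r * s, y)"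
      using Rats_mult[OF \<open>r \<in> \<rat>\<close>] by auto
    then show ?thesis
      by (rule rev_image_eqI)
  qed
  then have "map ((*\<^sub>R) r) xs \<in> lists ?Q"
    using xs(1) by (simp add: in_lists_conv_set)
  moreover have "r *\<^sub>R sum_list xs = sum_list (map ((*\<^sub>R) r) xs)" for xs :: "'a list"
    by (induction xs) (simp_all add: scaleR_add_right)
  ultimately show ?thesis
    unfolding rational_combinations_def xs(2) by (intro image_eqI)
qed

lemma separable_span_countable:
  fixes Y :: "'a::real_normed_vector set"
  assumes "countable Y"
  obtains D where "countable D" and "span Y \<subseteq> closure D"
proof (rule that)
  show "countable (rational_combinations Y)"
    using assms by (rule countable_rational_combinations)
  have "subspace (closure (rational_combinations Y))"
  proof (rule subspace_closure_Rats_subspace)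
    have "sum_list [] \<in> rational_combinations Y"
      unfolding rational_combinations_def by (rule imageI) simp
    then show "0 \<in> rational_combinations Y"
      by simp
  qed (simp_all add: rational_combinations_add rational_combinations_scale)
  moreover have "Y \<subseteq> closure (rational_combinations Y)"
    using rational_combinations_base closure_subset by blast
  ultimately show "span Y \<subseteq> closure (rational_combinations Y)"
    by (rule span_minimal[rotated])
qed

section \<open>Density character and cardinality\<close>

lemma countable_iff_ordLess_omega1: "countable A \<longleftrightarrow> |A| <o omega1"
  by (simp add: countable_card_le_natLeq cardSuc_ordLeq_ordLess[OF natLeq_Card_order card_of_Card_order])

lemma dens_is_omega1_not_separable:
  fixes D :: "'a::metric_space set"
  assumes "dens_is (UNIV :: 'a set) omega1" "countable D"
  shows "closure D \<noteq> UNIV"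
proof
  assume "closure D = UNIV"
  then have "omega1 \<le>o |D|"
    using assms(1) by (auto simp: dens_is_def card_ge_def)
  moreover have "|D| <o omega1"
    using assms(2) countable_iff_ordLess_omega1 by blast
  ultimately show False
    using not_ordLess_ordLeq by blast
qed

lemma nat_set_sequences_lepoll_nat_sets: "(UNIV :: (nat \<Rightarrow> nat set) set) \<lesssim> (UNIV :: nat set set)"
proof -
  define code :: "(nat \<Rightarrow> nat set) \<Rightarrow> nat set" where
    "code g = {prod_encode (n, k) | n k. k \<in> g n}" for g
  have "k \<in> g n \<longleftrightarrow> prod_encode (n, k) \<in> code g" for g n k
    by (auto simp: code_def)
  then have "inj code"
    by (intro injI ext set_eqI) metis
  then show ?thesis
    unfolding lepoll_def by blast
qed

lemma real_sequences_lepoll_reals: "(UNIV :: (nat \<Rightarrow> real) set) \<lesssim> (UNIV :: real set)"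
proof -
  obtain \<beta> :: "nat set \<Rightarrow> real" where "bij \<beta>"
    using nat_sets_eqpoll_reals by (auto simp: eqpoll_def)
  then have "inj (inv \<beta>)"
    by (simp add: bij_imp_bij_inv bij_is_inj)
  then have "inj (\<lambda>s. inv \<beta> \<circ> s)"
    by (intro injI ext) (simp add: fun_eq_iff inj_eq)
  then have "(UNIV :: (nat \<Rightarrow> real) set) \<lesssim> (UNIV :: (nat \<Rightarrow> nat set) set)"
    unfolding lepoll_def by blast
  also note nat_set_sequences_lepoll_nat_sets
  also note nat_sets_eqpoll_reals
  finally show ?thesis .
qed

lemma UNIV_lepoll_sequences_of_dense:
  fixes D :: "'a::metric_space set" and B :: "'b set"
  assumes dense: "closure D = UNIV" and "D \<lesssim> B"
  shows "(UNIV :: 'a set) \<lesssim> (UNIV :: (nat \<Rightarrow> 'b) set)"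
proof -
  obtain \<iota> :: "'a \<Rightarrow> 'b" where \<iota>: "inj_on \<iota> D"
    using \<open>D \<lesssim> B\<close> by (auto simp: lepoll_def)
  have "\<exists>s. (\<forall>n. s n \<in> D) \<and> s \<longlonglongrightarrow> x" for x
    using dense closure_sequential[of x D] by simp
  then obtain seq where seq: "\<And>x n. seq x n \<in> D" "\<And>x. seq x \<longlonglongrightarrow> x"
    by metis
  have "inj (\<lambda>x. \<iota> \<circ> seq x)"
  proof (rule injI)
    fix x y assume eq: "\<iota> \<circ> seq x = \<iota> \<circ> seq y"
    have "seq x n = seq y n" for n
      using inj_onD[OF \<iota> _ seq(1) seq(1)] fun_cong[OF eq, of n] by simp
    then have "seq x = seq y" ..
    then have "seq x \<longlonglongrightarrow> y"
      using seq(2)[of y] by simp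
    then show "x = y"
      using LIMSEQ_unique[OF seq(2)[of x]] by simp
  qed
  then show ?thesis
    unfolding lepoll_def by blast
qed

lemma card_of_UNIV_ordIso_omega1:
  assumes CH: "card_eq (UNIV :: real set) omega1"
    and dens: "dens_is (UNIV :: 'a::metric_space set) omega1"
  shows "|UNIV :: 'a set| =o omega1"
proof -
  obtain D :: "'a set" where "closure D = UNIV" and D: "|D| =o omega1"
    using dens by (auto simp: dens_is_def card_eq_def)
  have R: "|UNIV :: real set| =o omega1"
    using CH by (simp add: card_eq_def)
  then have "D \<approx> (UNIV :: real set)"
    unfolding eqpoll_iff_card_of_ordIso by (rule ordIso_transitive[OF D ordIso_symmetric])
  then have "(UNIV :: 'a set) \<lesssim> (UNIV :: (nat \<Rightarrow> real) set)"
    by (intro UNIV_lepoll_sequences_of_dense[OF \<open>closure D = UNIV\<close>] eqpoll_imp_lepoll)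
  also note real_sequences_lepoll_reals
  finally have "|UNIV :: 'a set| \<le>o |UNIV :: real set|"
    unfolding lepoll_def card_of_ordLeq .
  then have "|UNIV :: 'a set| \<le>o omega1"
    using R by (rule ordLeq_ordIso_trans)
  moreover have "omega1 \<le>o |UNIV :: 'a set|"
    using dens by (simp add: dens_is_def card_ge_def)
  ultimately show ?thesis
    by (simp add: ordIso_iff_ordLeq)
qed

section \<open>The transfinite construction\<close>

lemma Riesz_lemma_scaled:
  fixes Z :: "'a::real_normed_vector set"
  assumes Z: "subspace Z" "closed Z" "Z \<noteq> UNIV" and \<delta>: "0 < \<delta>" "\<delta> < 1"
  obtains c where "norm c = 1 - \<delta>" and "\<And>z. z \<in> Z \<Longrightarrow> (1 - \<delta>) * (1 - \<delta>) \<le> norm (c - z)"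
proof -
  obtain u where u: "norm u = 1" "\<And>z. z \<in> Z \<Longrightarrow> 1 - \<delta> \<le> norm (u - z)"
    using Riesz_lemma[OF Z \<delta>] by blast
  show ?thesis
  proof (rule that)
    show "norm ((1 - \<delta>) *\<^sub>R u) = 1 - \<delta>"
      using u(1) \<delta> by simp
    fix z assume "z \<in> Z"
    then have "(1 / (1 - \<delta>)) *\<^sub>R z \<in> Z"
      using Z(1) by (simp add: subspace_scale)
    then have "(1 - \<delta>) * (1 - \<delta>) \<le> (1 - \<delta>) * norm (u - (1 / (1 - \<delta>)) *\<^sub>R z)"
      using u(2) \<delta> by (intro mult_left_mono) auto
    also have "\<dots> = norm ((1 - \<delta>) *\<^sub>R (u - (1 / (1 - \<delta>)) *\<^sub>R z))"
      using \<delta> by simp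
    also have "(1 - \<delta>) *\<^sub>R (u - (1 / (1 - \<delta>)) *\<^sub>R z) = (1 - \<delta>) *\<^sub>R u - z"
      using \<delta> by (simp add: algebra_simps)
    finally show "(1 - \<delta>) * (1 - \<delta>) \<le> norm ((1 - \<delta>) *\<^sub>R u - z)" .
  qed
qed

lemma exists_far_point_avoiding_kernels:
  fixes Y :: "'a::banach set" and H :: "('a \<Rightarrow>\<^sub>L real) set"
  assumes nonsep: "\<And>D :: 'a set. countable D \<Longrightarrow> closure D \<noteq> UNIV"
    and Y: "countable Y" and H: "countable H" "0 \<notin> H" and \<epsilon>: "0 < \<epsilon>" "\<epsilon> < 1"
  obtains x where "norm x \<le> 1" and "\<And>y. y \<in> Y \<Longrightarrow> 1 - \<epsilon> \<le> norm (x - y)"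
    and "\<And>h. h \<in> H \<Longrightarrow> blinfun_apply h x \<noteq> 0"
proof -
  define Z where "Z = closure (span Y)"
  have Z: "subspace Z" "closed Z"
    unfolding Z_def by (simp_all add: subspace_closure subspace_span)
  obtain D where "countable D" "span Y \<subseteq> closure D"
    using separable_span_countable[OF Y] .
  then have "Z \<noteq> UNIV"
    using nonsep[of D] closure_minimal[of "span Y" "closure D"] unfolding Z_def by auto
  define \<delta> where "\<delta> = \<epsilon> / 3"
  have \<delta>: "0 < \<delta>" "\<delta> < 1"
    using \<epsilon> by (simp_all add: \<delta>_def)
  obtain c where c: "norm c = 1 - \<delta>" "\<And>z. z \<in> Z \<Longrightarrow> (1 - \<delta>) * (1 - \<delta>) \<le> norm (c - z)"
    using Riesz_lemma_scaled[OF Z \<open>Z \<noteq> UNIV\<close> \<delta>] by blast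
  obtain x where x: "x \<in> ball c \<delta>" "\<And>h. h \<in> H \<Longrightarrow> blinfun_apply h x \<noteq> 0"
    using exists_avoiding_countable_kernels[OF H, of "ball c \<delta>"] \<delta> by auto
  have xc: "norm (x - c) < \<delta>"
    using x(1) by (simp add: dist_norm norm_minus_commute)
  show ?thesis
  proof (rule that)
    have "norm x \<le> norm c + norm (x - c)"
      using norm_triangle_ineq[of c "x - c"] by simp
    then show "norm x \<le> 1"
      using c(1) xc by simp
  next
    fix y assume "y \<in> Y"
    then have "y \<in> Z"
      unfolding Z_def using closure_subset span_base by blast
    have "norm (c - y) \<le> norm (x - y) + norm (x - c)"
      using norm_triangle_ineq[of "x - y" "c - x"] by (simp add: norm_minus_commute)
    then have "(1 - \<delta>) * (1 - \<delta>) - \<delta> \<le> norm (x - y)"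
      using c(2)[OF \<open>y \<in> Z\<close>] xc by linarith
    moreover have "1 - \<epsilon> \<le> (1 - \<delta>) * (1 - \<delta>) - \<delta>"
      by (simp add: \<delta>_def algebra_simps)
    ultimately show "1 - \<epsilon> \<le> norm (x - y)"
      by linarith
  qed (use x(2) in blast)
qed

lemma wo_rel_recursive_choice:
  fixes r :: "'i rel" and P :: "'i \<Rightarrow> ('i \<Rightarrow> 'a) \<Rightarrow> 'a \<Rightarrow> bool"
  assumes r: "wo_rel r"
    and ex: "\<And>i g. \<exists>x. P i g x"
    and local: "\<And>i g g'. \<forall>j\<in>underS r i. g j = g' j \<Longrightarrow> P i g = P i g'"
  obtains g where "\<And>i. P i g (g i)"
proof -
  define H where "H g i = (SOME x. P i g x)" for g i
  have "wo_rel.adm_wo r H"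
    unfolding wo_rel.adm_wo_def[OF r] H_def
  proof (intro allI impI)
    fix g g' :: "'i \<Rightarrow> 'a" and i assume "\<forall>j\<in>underS r i. g j = g' j"
    then have "P i g = P i g'"
      by (rule local)
    then show "(SOME x. P i g x) = (SOME x. P i g' x)"
      by simp
  qed
  then have "wo_rel.worec r H = H (wo_rel.worec r H)"
    by (rule wo_rel.worec_fixpoint[OF r])
  then have "P i (wo_rel.worec r H) (wo_rel.worec r H i)" for i
    using someI_ex[OF ex] by (metis H_def)
  then show ?thesis
    using that by blast
qed

lemma closure_span_uncountable_eq_UNIV:
  fixes g :: "('a::real_normed_vector \<Rightarrow>\<^sub>L real) \<Rightarrow> 'a"
  assumes W: "wo_rel W" "Field W = UNIV" "\<And>i. countable (underS W i)"
    and nonvanishing: "\<And>i h. h \<in> underS W i \<Longrightarrow> h \<noteq> 0 \<Longrightarrow> blinfun_apply h (g i) \<noteq> 0"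
    and L: "L \<subseteq> range g" "uncountable L"
  shows "closure (span L) = UNIV"
proof (rule ccontr)
  assume "closure (span L) \<noteq> UNIV"
  then obtain x0 where "x0 \<notin> closure (span L)"
    by blast
  then obtain f :: "'a \<Rightarrow>\<^sub>L real" where f: "\<And>z. z \<in> closure (span L) \<Longrightarrow> blinfun_apply f z = 0"
    and "blinfun_apply f x0 = 1"
    using separating_blinfun_closed_subspace[OF subspace_closure[OF subspace_span] closed_closure]
    by blast
  then have "f \<noteq> 0"
    by auto
  have "L \<subseteq> g ` insert f (underS W f)"
  proof
    fix x assume "x \<in> L"
    then obtain i where i: "x = g i"
      using L(1) by blast
    have "blinfun_apply f (g i) = 0"
      using f \<open>x \<in> L\<close> closure_subset span_base i by blast
    then have "f \<notin> underS W i"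
      using nonvanishing \<open>f \<noteq> 0\<close> by blast
    then have "i = f \<or> i \<in> underS W f"
      using wo_rel.TOTALS[OF W(1)] W(2) by (auto simp: underS_def)
    then show "x \<in> g ` insert f (underS W f)"
      using i by blast
  qed
  moreover have "countable (g ` insert f (underS W f))"
    using W(3) by simp
  ultimately show False
    using L(2) countable_subset by blast
qed

lemma countable_underS_card_of_UNIV:
  assumes "|UNIV :: 'a set| =o omega1"
  shows "countable (underS |UNIV :: 'a set| i)"
proof -
  have "|underS |UNIV :: 'a set| i| <o |UNIV :: 'a set|"
    by (rule card_of_underS[OF card_of_Card_order]) (simp add: Field_card_of)
  then show ?thesis
    unfolding countable_iff_ordLess_omega1 using assms by (rule ordLess_ordIso_trans)
qed

lemma exists_separated_family_avoiding_earlier_kernels: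
  fixes W :: "('a::banach \<Rightarrow>\<^sub>L real) rel" and \<epsilon> :: real
  assumes nonsep: "\<And>D :: 'a set. countable D \<Longrightarrow> closure D \<noteq> UNIV"
    and W: "wo_rel W" "Field W = UNIV" "\<And>i. countable (underS W i)"
    and \<epsilon>: "0 < \<epsilon>" "\<epsilon> < 1"
  obtains g :: "('a \<Rightarrow>\<^sub>L real) \<Rightarrow> 'a" where "\<And>i. norm (g i) \<le> 1"
    and "\<And>i h. h \<in> underS W i \<Longrightarrow> h \<noteq> 0 \<Longrightarrow> blinfun_apply h (g i) \<noteq> 0"
    and "\<And>i j. i \<noteq> j \<Longrightarrow> 1 - \<epsilon> \<le> norm (g i - g j)"
proof -
  define P where "P i g x \<longleftrightarrow> norm x \<le> 1 \<and>
      (\<forall>h\<in>underS W i. h \<noteq> 0 \<longrightarrow> blinfun_apply h x \<noteq> 0) \<and>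
      (\<forall>j\<in>underS W i. 1 - \<epsilon> \<le> norm (x - g j))"
    for i and g :: "('a \<Rightarrow>\<^sub>L real) \<Rightarrow> 'a" and x
  have ex: "\<exists>x. P i g x" for i g
  proof -
    have "countable (g ` underS W i)" "countable (underS W i - {0})" "0 \<notin> underS W i - {0}"
      using W(3) by simp_all
    then obtain x where "norm x \<le> 1" "\<And>y. y \<in> g ` underS W i \<Longrightarrow> 1 - \<epsilon> \<le> norm (x - y)"
      "\<And>h. h \<in> underS W i - {0} \<Longrightarrow> blinfun_apply h x \<noteq> 0"
      using exists_far_point_avoiding_kernels[OF nonsep _ _ _ \<epsilon>] by blast
    then show ?thesis
      unfolding P_def by blast
  qed
  have local: "P i g = P i g'" if "\<forall>j\<in>underS W i. g j = g' j" for i g g'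
    using that by (simp add: P_def fun_eq_iff)
  obtain g where g: "\<And>i. P i g (g i)"
    using wo_rel_recursive_choice[of W P, OF W(1) ex local] by blast
  show ?thesis
  proof (rule that)
    show "norm (g i) \<le> 1" for i
      using g[of i] by (simp add: P_def)
    show "blinfun_apply h (g i) \<noteq> 0" if "h \<in> underS W i" "h \<noteq> 0" for i h
      using g[of i] that by (simp add: P_def)
    show "1 - \<epsilon> \<le> norm (g i - g j)" if "i \<noteq> j" for i j
    proof -
      have "j \<in> underS W i \<or> i \<in> underS W j"
        using wo_rel.TOTALS[OF W(1)] W(2) that by (auto simp: underS_def)
      then show ?thesis
        using g[of i] g[of j] by (auto simp: P_def norm_minus_commute)
    qed
  qed
qed

lemma exists_separated_overcomplete_subset_ball:
  fixes \<epsilon> :: real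
  assumes nonsep: "\<And>D. countable D \<Longrightarrow> closure D \<noteq> (UNIV :: 'a set)"
    and dual: "|UNIV :: ('a \<Rightarrow>\<^sub>L real) set| =o omega1"
    and \<epsilon>: "0 < \<epsilon>" "\<epsilon> < 1"
  obtains S :: "'a::banach set" where "S \<subseteq> cball 0 1" and "overcomplete omega1 S"
    and "\<And>x y. x \<in> S \<Longrightarrow> y \<in> S \<Longrightarrow> x \<noteq> y \<Longrightarrow> 1 - \<epsilon> \<le> norm (x - y)"
proof -
  define W where "W = |UNIV :: ('a \<Rightarrow>\<^sub>L real) set|"
  have W: "wo_rel W" "Field W = UNIV" "countable (underS W i)" for i
    unfolding W_def wo_rel_def
    by (rule card_of_Well_order, rule Field_card_of, rule countable_underS_card_of_UNIV[OF dual])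
  obtain g :: "('a \<Rightarrow>\<^sub>L real) \<Rightarrow> 'a" where ball: "\<And>i. norm (g i) \<le> 1"
    and nonvanishing: "\<And>i h. h \<in> underS W i \<Longrightarrow> h \<noteq> 0 \<Longrightarrow> blinfun_apply h (g i) \<noteq> 0"
    and separated: "\<And>i j. i \<noteq> j \<Longrightarrow> 1 - \<epsilon> \<le> norm (g i - g j)"
    using exists_separated_family_avoiding_earlier_kernels[OF nonsep W \<epsilon>] by blast
  have "inj g"
  proof (rule injI, rule ccontr)
    fix i j assume "g i = g j" "i \<noteq> j"
    then show False
      using separated[of i j] \<epsilon> by simp
  qed
  define S where "S = range g"
  have card_S: "|S| =o omega1"
  proof -
    have "bij_betw g UNIV S"
      using \<open>inj g\<close> by (simp add: S_def bij_betw_def)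
    then have "|UNIV :: ('a \<Rightarrow>\<^sub>L real) set| =o |S|"
      by (rule iffD1[OF card_of_ordIso, OF exI])
    then show ?thesis
      using dual by (rule ordIso_transitive[OF ordIso_symmetric])
  qed
  have "closure (span L) = UNIV" if "L \<subseteq> S" "|L| =o |S|" for L
  proof (rule closure_span_uncountable_eq_UNIV[OF W nonvanishing])
    show "L \<subseteq> range g"
      using \<open>L \<subseteq> S\<close> by (simp add: S_def)
    have "|L| =o omega1"
      using \<open>|L| =o |S|\<close> card_S by (rule ordIso_transitive)
    then show "uncountable L"
      unfolding countable_iff_ordLess_omega1 using not_ordLess_ordIso by blast
  qed
  show ?thesis
  proof (rule that)
    show "S \<subseteq> cball 0 1"
      using ball by (auto simp: S_def)
    show "overcomplete omega1 S"
      using card_S \<open>\<And>L. L \<subseteq> S \<Longrightarrow> |L| =o |S| \<Longrightarrow> closure (span L) = UNIV\<close>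
      by (simp add: overcomplete_def card_eq_def)
    show "1 - \<epsilon> \<le> norm (x - y)" if "x \<in> S" "y \<in> S" "x \<noteq> y" for x y
      using that unfolding S_def by (fastforce intro: separated)
  qed
qed

theorem proposition4p3:
  assumes CH: "card_eq (UNIV :: real set) omega1"
    and densX: "dens_is (UNIV :: 'a::banach set) omega1"
    and densXstar: "dens_is (UNIV :: ('a \<Rightarrow>\<^sub>L real) set) omega1"
    and eps: "\<epsilon> > (0::real)"
  shows "\<exists>S :: 'a set. S \<subseteq> cball 0 1 \<and> overcomplete omega1 S \<and>
           (\<forall>x\<in>S. \<forall>y\<in>S. x \<noteq> y \<longrightarrow> norm (x - y) \<ge> 1 - \<epsilon>)"
proof -
  have "0 < min \<epsilon> (1 / 2)" "min \<epsilon> (1 / 2) < (1::real)"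
    using eps by simp_all
  then obtain S :: "'a set" where "S \<subseteq> cball 0 1" "overcomplete omega1 S"
    and separated: "\<And>x y. x \<in> S \<Longrightarrow> y \<in> S \<Longrightarrow> x \<noteq> y \<Longrightarrow> 1 - min \<epsilon> (1 / 2) \<le> norm (x - y)"
    using exists_separated_overcomplete_subset_ball[OF dens_is_omega1_not_separable[OF densX]
        card_of_UNIV_ordIso_omega1[OF CH densXstar]]
    by blast
  moreover have "1 - \<epsilon> \<le> 1 - min \<epsilon> (1 / 2)"
    by simp
  ultimately show ?thesis
    by (meson order.trans)
qed

end
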